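(* There exist a family of Boolean functions $f_n:\{0,1\}^n\to\{0,1\}$ and a family of vtrees $T_n$ on the variable set $\{x_1,\dots,x_n\}$ of $f_n$ such that both $f_n$ and its negation $\overline{f_n}$ can be represented by structured $d$-DNNFs respecting $T_n$ of size polynomial in $n$, whereas every SDD respecting $T_n$ that represents $f_n$ has size $2^{\Omega(n)}$. (For instance, for $n$ divisible by $10$ one may take $f_n$ to be the hidden weighted bit function $\mathrm{HWB}_n(x_1,\dots,x_n)=x_{\|x\|}$, where $\|x\|=x_1+\dots+x_n$ and the output is $0$ if $\|x\|=0$, and $T_n$ the vtree whose root has a left subtree with $\tfrac{6}{10}n$ leaves and a right subtree with $\tfrac{4}{10}n$ leaves, both subtrees being right-linear, i.e. for every inner node the left child is a leaf.)
   Context: An NNF on a variable set $X$ is a Boolean circuit with fan-in 2 $\wedge$-gates and unbounded fan-in $\vee$-gates whose inputs are literals $x,\overline{x}$ ($x\in X$) or the constants $\bot,\top$; its size is its number of gates. For a gate $u$, $\mathrm{vars}(u)$ is the set of variables whose literals occur in the subcircuit rooted at $u$. An NNF is decomposable (a DNNF) if for every $\wedge$-gate the two children have disjoint variable sets; it is deterministic (a $d$-DNNF) if for every $\vee$-gate the functions computed at its children are pairwise not simultaneously satisfiable. A vtree for $X$ is a full rooted binary tree whose leaves are in bijection with $X$; for a vtree node $v$, $\mathrm{vars}(v)$ is the set of variables at leaves below $v$. An $\wedge$-gate $u$ with children $u_l,u_r$ respects a vtree node $v$ with children $v_l,v_r$ if $\mathrm{vars}(u_l)\subseteq \mathrm{vars}(v_l)$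 and $\mathrm{vars}(u_r)\subseteq\mathrm{vars}(v_r)$; a (d-)DNNF respects $T$ (is a structured (d-)DNNF w.r.t. $T$) if every $\wedge$-gate respects some node of $T$. A set of Boolean functions $\{f_1,\dots,f_\ell\}$ on the same variables is a partition if they are pairwise disjoint (never simultaneously 1), none equals the constant $\bot$, and their disjunction is $\top$. An SDD respecting a vtree $T$ is defined inductively: a single node labeled $\bot$ or $\top$ (any $T$); a single node labeled by a literal on a variable of $T$; or an $\vee$-gate whose inputs are $\wedge$-gates $g_1,\dots,g_\ell$, each $g_i$ having inputs $p_i,s_i$, where $v$ is an inner node of $T$ with left child $v_L$ and right child $v_R$, the subcircuits at $p_1,\dots,p_\ell$ are SDDs respecting the subtree of $T$ rooted at $v_L$, those at $s_1,\dots,s_\ell$ are SDDs respecting the subtree rooted at $v_R$, and the functions computed at $p_1,\dots,p_\ell$ form a partition. *)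

theory Defs
  imports Complex_Main
begin

datatype 'v vtree = VLeaf 'v | VNode "'v vtree" "'v vtree"

fun leaves :: "'v vtree \<Rightarrow> 'v list" where
  "leaves (VLeaf x) = [x]"
| "leaves (VNode l r) = leaves l @ leaves r"

fun subtrees :: "'v vtree \<Rightarrow> 'v vtree set" where
  "subtrees (VLeaf x) = {VLeaf x}"
| "subtrees (VNode l r) = insert (VNode l r) (subtrees l \<union> subtrees r)"

definition vtree_for :: "'v vtree \<Rightarrow> 'v set \<Rightarrow> bool" where
  "vtree_for T X \<longleftrightarrow> distinct (leaves T) \<and> set (leaves T) = X"

section \<open>NNF circuits (DAGs given as topologically ordered gate lists)\<close>

text \<open>An input of a gate: a literal (Lit x True = x, Lit x False = negated x),
  a constant, or (a reference to) an earlier gate.\<close>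
datatype 'v inp = Lit 'v bool | Const bool | Gate nat

datatype 'v gate = And "'v inp" "'v inp" | Or "'v inp list"

type_synonym 'v circuit = "'v gate list \<times> 'v inp"

definition csize :: "'v circuit \<Rightarrow> nat" where
  "csize C = length (fst C)"

fun gate_inputs :: "'v gate \<Rightarrow> 'v inp list" where
  "gate_inputs (And l r) = [l, r]"
| "gate_inputs (Or ls) = ls"

text \<open>Well-formed NNF on variable set X: gates only refer to earlier gates (acyclicity),
  all literals are on variables of X.\<close>
definition nnf_on :: "'v set \<Rightarrow> 'v circuit \<Rightarrow> bool" where
  "nnf_on X C \<longleftrightarrow>
     (\<forall>i<length (fst C). \<forall>u\<in>set (gate_inputs (fst C ! i)).
         (\<forall>j. u = Gate j \<longrightarrow> j < i) \<and> (\<forall>x b. u = Lit x b \<longrightarrow> x \<in> X))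
   \<and> (\<forall>j. snd C = Gate j \<longrightarrow> j < length (fst C))
   \<and> (\<forall>x b. snd C = Lit x b \<longrightarrow> x \<in> X)"

fun inp_val :: "bool list \<Rightarrow> ('v \<Rightarrow> bool) \<Rightarrow> 'v inp \<Rightarrow> bool" where
  "inp_val vs a (Lit x b) = (a x = b)"
| "inp_val vs a (Const b) = b"
| "inp_val vs a (Gate j) = (j < length vs \<and> vs ! j)"

fun gate_val :: "bool list \<Rightarrow> ('v \<Rightarrow> bool) \<Rightarrow> 'v gate \<Rightarrow> bool" where
  "gate_val vs a (And l r) = (inp_val vs a l \<and> inp_val vs a r)"
| "gate_val vs a (Or ls) = (\<exists>u\<in>set ls. inp_val vs a u)"

definition gate_vals :: "'v gate list \<Rightarrow> ('v \<Rightarrow> bool) \<Rightarrow> bool list" where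
  "gate_vals gs a = foldl (\<lambda>vs g. vs @ [gate_val vs a g]) [] gs"

definition eval_node :: "'v gate list \<Rightarrow> ('v \<Rightarrow> bool) \<Rightarrow> 'v inp \<Rightarrow> bool" where
  "eval_node gs a u = inp_val (gate_vals gs a) a u"

definition represents :: "'v circuit \<Rightarrow> (('v \<Rightarrow> bool) \<Rightarrow> bool) \<Rightarrow> bool" where
  "represents C f \<longleftrightarrow> (\<forall>a. eval_node (fst C) a (snd C) = f a)"

fun inp_vars :: "'v set list \<Rightarrow> 'v inp \<Rightarrow> 'v set" where
  "inp_vars vs (Lit x b) = {x}"
| "inp_vars vs (Const b) = {}"
| "inp_vars vs (Gate j) = (if j < length vs then vs ! j else {})"

definition gate_varsets :: "'v gate list \<Rightarrow> 'v set list" where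
  "gate_varsets gs = foldl (\<lambda>vs g. vs @ [\<Union>u\<in>set (gate_inputs g). inp_vars vs u]) [] gs"

definition node_vars :: "'v gate list \<Rightarrow> 'v inp \<Rightarrow> 'v set" where
  "node_vars gs u = inp_vars (gate_varsets gs) u"

definition decomposable :: "'v gate list \<Rightarrow> bool" where
  "decomposable gs \<longleftrightarrow>
     (\<forall>i<length gs. \<forall>l r. gs ! i = And l r \<longrightarrow> node_vars gs l \<inter> node_vars gs r = {})"

definition deterministic :: "'v gate list \<Rightarrow> bool" where
  "deterministic gs \<longleftrightarrow>
     (\<forall>i<length gs. \<forall>ls. gs ! i = Or ls \<longrightarrow>
        (\<forall>k<length ls. \<forall>k'<length ls. k \<noteq> k' \<longrightarrow>
            (\<forall>a. \<not> (eval_node gs a (ls ! k) \<and> eval_node gs a (ls ! k')))))"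

definition respects_vtree :: "'v gate list \<Rightarrow> 'v vtree \<Rightarrow> bool" where
  "respects_vtree gs T \<longleftrightarrow>
     (\<forall>i<length gs. \<forall>l r. gs ! i = And l r \<longrightarrow>
        (\<exists>vl vr. VNode vl vr \<in> subtrees T \<and>
                 node_vars gs l \<subseteq> set (leaves vl) \<and> node_vars gs r \<subseteq> set (leaves vr)))"

definition structured_dDNNF :: "'v set \<Rightarrow> 'v vtree \<Rightarrow> 'v circuit \<Rightarrow> bool" where
  "structured_dDNNF X T C \<longleftrightarrow>
     nnf_on X C \<and> decomposable (fst C) \<and> deterministic (fst C) \<and> respects_vtree (fst C) T"

definition is_partition :: "(('v \<Rightarrow> bool) \<Rightarrow> bool) list \<Rightarrow> bool" where
  "is_partition fs \<longleftrightarrow>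
     (\<forall>i<length fs. \<forall>j<length fs. i \<noteq> j \<longrightarrow> (\<forall>a. \<not> ((fs ! i) a \<and> (fs ! j) a)))
   \<and> (\<forall>i<length fs. \<exists>a. (fs ! i) a)
   \<and> (\<forall>a. \<exists>i<length fs. (fs ! i) a)"

fun and_inputs :: "'v gate list \<Rightarrow> 'v inp \<Rightarrow> ('v inp \<times> 'v inp) option" where
  "and_inputs gs (Gate i) =
     (if i < length gs then (case gs ! i of And p s \<Rightarrow> Some (p, s) | Or _ \<Rightarrow> None) else None)"
| "and_inputs gs (Lit x b) = None"
| "and_inputs gs (Const b) = None"

inductive sdd :: "'v vtree \<Rightarrow> 'v gate list \<Rightarrow> 'v inp \<Rightarrow> bool" where
  sdd_const: "sdd T gs (Const b)"
| sdd_lit: "x \<in> set (leaves T) \<Longrightarrow> sdd T gs (Lit x b)"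
| sdd_or: "\<lbrakk> j < length gs; gs ! j = Or ls; VNode vL vR \<in> subtrees T;
             \<forall>k<length ls. \<exists>p s. and_inputs gs (ls ! k) = Some (p, s) \<and> sdd vL gs p \<and> sdd vR gs s;
             is_partition (map (\<lambda>g. \<lambda>a. eval_node gs a (fst (the (and_inputs gs g)))) ls) \<rbrakk>
           \<Longrightarrow> sdd T gs (Gate j)"

definition is_SDD :: "'v set \<Rightarrow> 'v vtree \<Rightarrow> 'v circuit \<Rightarrow> bool" where
  "is_SDD X T C \<longleftrightarrow> nnf_on X C \<and> sdd T (fst C) (snd C)"

end

theory Submission
  imports Defs
begin

text \<open>In place of the hidden weighted bit function we use the following pointer function on
  \<open>2m\<close> variables: if \<open>x\<^bsub>2m-t\<^esub>\<close> is the last true variable of the right half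
  \<open>x\<^bsub>m+1\<^esub>, \<dots>, x\<^bsub>2m\<^esub>\<close>, the output is the left variable \<open>x\<^bsub>m-t\<^esub>\<close>.
  The vtree splits the variables into the two halves, each arranged right-linearly.
  Scanning the right half downwards from \<open>x\<^bsub>2m\<^esub>\<close> gives d-DNNFs with \<open>4m + 2\<close> gates for
  the function and for its negation; they are deterministic because the last true variable is
  unique. An SDD, on the other hand, must decompose the function at the root of the vtree, since
  the function depends on both halves, and the primes of this decomposition partition the
  assignments of the left half. Left assignments satisfying the same prime induce the same
  subfunction of the right half, but all \<open>2\<^sup>m\<close> left assignments induce different subfunctions:
  setting only \<open>x\<^bsub>m+d\<^esub>\<close> on the right reads off \<open>x\<^bsub>d\<^esub>\<close>.\<close>

definition acyclic_gates :: "'v gate list \<Rightarrow> bool" where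
  "acyclic_gates gs \<longleftrightarrow> (\<forall>i<length gs. \<forall>u\<in>set (gate_inputs (gs ! i)). \<forall>j. u = Gate j \<longrightarrow> j < i)"

lemma nnf_on_acyclic_gates: "nnf_on X C \<Longrightarrow> acyclic_gates (fst C)"
  unfolding nnf_on_def acyclic_gates_def by blast

lemma length_foldl_snoc: "length (foldl (\<lambda>vs g. vs @ [h vs g]) [] gs) = length gs"
  by (induction gs rule: rev_induct) auto

lemma nth_foldl_snoc:
  assumes "i < length gs"
  shows "foldl (\<lambda>vs g. vs @ [h vs g]) [] gs ! i
    = h (take i (foldl (\<lambda>vs g. vs @ [h vs g]) [] gs)) (gs ! i)"
  using assms
proof (induction gs rule: rev_induct)
  case (snoc g gs)
  then show ?case
    by (cases "i < length gs") (auto simp: nth_append length_foldl_snoc less_Suc_eq)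
qed simp

lemma inp_val_take:
  "(\<forall>j. u = Gate j \<longrightarrow> j < i) \<Longrightarrow> i \<le> length V \<Longrightarrow> inp_val (take i V) a u = inp_val V a u"
  by (cases u) auto

lemma inp_vars_take:
  "(\<forall>j. u = Gate j \<longrightarrow> j < i) \<Longrightarrow> i \<le> length V \<Longrightarrow> inp_vars (take i V) u = inp_vars V u"
  by (cases u) auto

lemma eval_node_Lit [simp]: "eval_node gs a (Lit x b) = (a x = b)"
  and eval_node_Const [simp]: "eval_node gs a (Const b) = b"
  by (simp_all add: eval_node_def)

lemma node_vars_Lit [simp]: "node_vars gs (Lit x b) = {x}"
  by (simp add: node_vars_def)

lemma eval_node_Gate:
  assumes "acyclic_gates gs" "i < length gs"
  shows "eval_node gs a (Gate i) = gate_val (gate_vals gs a) a (gs ! i)"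
proof -
  let ?V = "gate_vals gs a"
  have len: "length ?V = length gs"
    unfolding gate_vals_def by (rule length_foldl_snoc)
  have "?V ! i = gate_val (take i ?V) a (gs ! i)"
    unfolding gate_vals_def using assms(2) by (rule nth_foldl_snoc)
  also have "\<dots> = gate_val ?V a (gs ! i)"
  proof -
    have "\<forall>u\<in>set (gate_inputs (gs ! i)). \<forall>j. u = Gate j \<longrightarrow> j < i"
      using assms unfolding acyclic_gates_def by blast
    then show ?thesis
      using assms(2) len by (cases "gs ! i") (auto simp: inp_val_take)
  qed
  finally show ?thesis
    using len assms(2) by (simp add: eval_node_def)
qed

lemma eval_node_And:
  "acyclic_gates gs \<Longrightarrow> i < length gs \<Longrightarrow> gs ! i = And l r \<Longrightarrow>
     eval_node gs a (Gate i) = (eval_node gs a l \<and> eval_node gs a r)"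
  using eval_node_Gate[of gs i a] by (simp add: eval_node_def)

lemma eval_node_Or:
  "acyclic_gates gs \<Longrightarrow> i < length gs \<Longrightarrow> gs ! i = Or ls \<Longrightarrow>
     eval_node gs a (Gate i) = (\<exists>u\<in>set ls. eval_node gs a u)"
  using eval_node_Gate[of gs i a] by (simp add: eval_node_def)

lemma node_vars_Gate:
  assumes "acyclic_gates gs" "i < length gs"
  shows "node_vars gs (Gate i) = (\<Union>u\<in>set (gate_inputs (gs ! i)). node_vars gs u)"
proof -
  let ?V = "gate_varsets gs"
  have len: "length ?V = length gs"
    unfolding gate_varsets_def by (rule length_foldl_snoc)
  have "?V ! i = (\<Union>u\<in>set (gate_inputs (gs ! i)). inp_vars (take i ?V) u)"
    unfolding gate_varsets_def using assms(2) by (rule nth_foldl_snoc)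
  also have "\<dots> = (\<Union>u\<in>set (gate_inputs (gs ! i)). inp_vars ?V u)"
  proof -
    have "\<forall>u\<in>set (gate_inputs (gs ! i)). \<forall>j. u = Gate j \<longrightarrow> j < i"
      using assms unfolding acyclic_gates_def by blast
    then show ?thesis
      using assms(2) len by (auto simp: inp_vars_take)
  qed
  finally show ?thesis
    using len assms(2) by (simp add: node_vars_def)
qed

section \<open>Subfunctions of an SDD\<close>

lemma and_inputs_SomeD:
  "and_inputs gs u = Some (p, s) \<Longrightarrow> \<exists>i. u = Gate i \<and> i < length gs \<and> gs ! i = And p s"
  by (cases u) (auto split: if_splits gate.splits)

lemma eval_node_and_inputs:
  assumes "acyclic_gates gs" "and_inputs gs g = Some (p, s)"
  shows "eval_node gs a g = (eval_node gs a p \<and> eval_node gs a s)"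
  using and_inputs_SomeD[OF assms(2)] eval_node_And[OF assms(1)] by auto

lemma leaves_subset_if_subtree: "v \<in> subtrees T \<Longrightarrow> set (leaves v) \<subseteq> set (leaves T)"
  by (induction T) auto

lemma eval_node_sdd_cong:
  assumes "sdd T gs u" "acyclic_gates gs" "\<forall>x\<in>set (leaves T). a x = b x"
  shows "eval_node gs a u = eval_node gs b u"
  using assms
proof (induction arbitrary: a b rule: sdd.induct)
  case (sdd_or j gs ls vL vR T)
  have agree: "\<forall>x\<in>set (leaves vL). a x = b x" "\<forall>x\<in>set (leaves vR). a x = b x"
    using sdd_or.prems(2) leaves_subset_if_subtree[OF sdd_or.hyps(3)] by auto
  have "eval_node gs a g = eval_node gs b g" if "g \<in> set ls" for g
  proof -
    obtain k where "k < length ls" "g = ls ! k"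
      using \<open>g \<in> set ls\<close> by (auto simp: in_set_conv_nth)
    then obtain p s where ps: "and_inputs gs g = Some (p, s)"
      and "\<forall>a b. (\<forall>x\<in>set (leaves vL). a x = b x) \<longrightarrow> eval_node gs a p = eval_node gs b p"
      and "\<forall>a b. (\<forall>x\<in>set (leaves vR). a x = b x) \<longrightarrow> eval_node gs a s = eval_node gs b s"
      using sdd_or.IH sdd_or.prems(1) by blast
    with agree have "eval_node gs a p = eval_node gs b p" "eval_node gs a s = eval_node gs b s"
      by blast+
    then show ?thesis
      using eval_node_and_inputs[OF sdd_or.prems(1) ps] by simp
  qed
  then show ?case
    using eval_node_Or[OF sdd_or.prems(1) sdd_or.hyps(1,2)] by simp
qed simp_all

lemma is_partition_map:
  "is_partition (map F xs) \<longleftrightarrow>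
     (\<forall>i<length xs. \<forall>j<length xs. i \<noteq> j \<longrightarrow> (\<forall>a. \<not> (F (xs ! i) a \<and> F (xs ! j) a)))
   \<and> (\<forall>i<length xs. \<exists>a. F (xs ! i) a) \<and> (\<forall>a. \<exists>i<length xs. F (xs ! i) a)"
proof -
  have "(\<exists>i<length xs. (map F xs ! i) a) \<longleftrightarrow> (\<exists>i<length xs. F (xs ! i) a)" for a
    by (metis nth_map)
  then show ?thesis
    by (simp add: is_partition_def)
qed

text \<open>\<open>override_on c a L\<close> agrees with \<open>a\<close> on \<open>L\<close> and with \<open>c\<close> elsewhere, so fixing the
  variables of \<open>vL\<close> as in \<open>a\<close> turns the SDD node into the sub of the unique prime true at \<open>a\<close>.\<close>

lemma sdd_Or_subfunction:
  assumes acyc: "acyclic_gates gs" and j: "j < length gs" "gs ! j = Or ls"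
    and elems: "\<forall>k<length ls. \<exists>p s. and_inputs gs (ls ! k) = Some (p, s) \<and> sdd vL gs p \<and> sdd vR gs s"
    and part: "is_partition (map (\<lambda>g a. eval_node gs a (fst (the (and_inputs gs g)))) ls)"
    and disj: "set (leaves vL) \<inter> set (leaves vR) = {}"
  shows "\<exists>g\<in>set ls. (\<lambda>c. eval_node gs (override_on c a (set (leaves vL))) (Gate j))
                   = (\<lambda>c. eval_node gs c (snd (the (and_inputs gs g))))"
proof -
  let ?L = "set (leaves vL)" and ?R = "set (leaves vR)"
  define prime where "prime = (\<lambda>g a. eval_node gs a (fst (the (and_inputs gs g))))"
  define sub where "sub = (\<lambda>g a. eval_node gs a (snd (the (and_inputs gs g))))"
  have elem: "eval_node gs c g = (prime g c \<and> sub g c)"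
    "\<forall>x\<in>?L. c x = c' x \<Longrightarrow> prime g c = prime g c'"
    "\<forall>x\<in>?R. c x = c' x \<Longrightarrow> sub g c = sub g c'"
    if "g \<in> set ls" for g c c'
  proof -
    obtain p s where ps: "and_inputs gs g = Some (p, s)" "sdd vL gs p" "sdd vR gs s"
      using elems \<open>g \<in> set ls\<close> by (auto simp: in_set_conv_nth)
    then show "eval_node gs c g = (prime g c \<and> sub g c)"
      using eval_node_and_inputs[OF acyc ps(1)] by (simp add: prime_def sub_def)
    show "\<forall>x\<in>?L. c x = c' x \<Longrightarrow> prime g c = prime g c'"
      using eval_node_sdd_cong[OF ps(2) acyc] ps(1) by (simp add: prime_def)
    show "\<forall>x\<in>?R. c x = c' x \<Longrightarrow> sub g c = sub g c'"
      using eval_node_sdd_cong[OF ps(3) acyc] ps(1) by (simp add: sub_def)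
  qed
  have disjoint: "\<forall>i<length ls. \<forall>i'<length ls. i \<noteq> i' \<longrightarrow> (\<forall>c. \<not> (prime (ls ! i) c \<and> prime (ls ! i') c))"
    and cover: "\<forall>c. \<exists>i<length ls. prime (ls ! i) c"
    using part unfolding is_partition_map prime_def by auto
  obtain k where k: "k < length ls" "prime (ls ! k) a"
    using cover by blast
  have unique: "k' = k" if "k' < length ls" "prime (ls ! k') a" for k'
    using disjoint k that by blast
  have "eval_node gs (override_on c a ?L) (Gate j) = sub (ls ! k) c" for c
  proof -
    have "eval_node gs (override_on c a ?L) (Gate j)
        = (\<exists>g\<in>set ls. prime g (override_on c a ?L) \<and> sub g (override_on c a ?L))"
      using eval_node_Or[OF acyc j] elem(1) by simp
    also have "\<dots> = (\<exists>g\<in>set ls. prime g a \<and> sub g c)"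
    proof (intro bex_cong refl conj_cong)
      fix g assume "g \<in> set ls"
      show "prime g (override_on c a ?L) = prime g a"
        by (rule elem(2)[OF \<open>g \<in> set ls\<close>]) simp
      show "sub g (override_on c a ?L) = sub g c"
        by (rule elem(3)[OF \<open>g \<in> set ls\<close>]) (use disj in \<open>auto simp: override_on_def\<close>)
    qed
    also have "\<dots> = sub (ls ! k) c"
    proof
      assume "\<exists>g\<in>set ls. prime g a \<and> sub g c"
      then obtain k' where "k' < length ls" "prime (ls ! k') a" "sub (ls ! k') c"
        by (metis in_set_conv_nth)
      then show "sub (ls ! k) c"
        using unique by blast
    qed (use k in auto)
    finally show ?thesis .
  qed
  then have "(\<lambda>c. eval_node gs (override_on c a ?L) (Gate j)) = sub (ls ! k)"
    by (rule ext)
  then show ?thesis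
    using nth_mem[OF k(1)] unfolding sub_def by blast
qed

lemma card_le_length_if_distinct_subfunctions:
  assumes acyc: "acyclic_gates gs" and j: "j < length gs" "gs ! j = Or ls"
    and elems: "\<forall>k<length ls. \<exists>p s. and_inputs gs (ls ! k) = Some (p, s) \<and> sdd vL gs p \<and> sdd vR gs s"
    and part: "is_partition (map (\<lambda>g a. eval_node gs a (fst (the (and_inputs gs g)))) ls)"
    and disj: "set (leaves vL) \<inter> set (leaves vR) = {}"
    and distinct: "inj_on (\<lambda>a c. eval_node gs (override_on c a (set (leaves vL))) (Gate j)) A"
  shows "card A \<le> length gs"
proof -
  let ?sub = "\<lambda>g c. eval_node gs c (snd (the (and_inputs gs g)))"
  have "set ls \<subseteq> Gate ` {..<length gs}"
    using elems and_inputs_SomeD by (fastforce simp: in_set_conv_nth)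
  have "(\<lambda>a c. eval_node gs (override_on c a (set (leaves vL))) (Gate j)) ` A \<subseteq> ?sub ` set ls"
    using sdd_Or_subfunction[OF acyc j elems part disj] by blast
  then have "card A \<le> card (?sub ` set ls)"
    using card_image[OF distinct] by (metis card_mono finite_imageI finite_set)
  also have "\<dots> \<le> card (set ls)"
    by (rule card_image_le) simp
  also have "\<dots> \<le> card (Gate ` {..<length gs} :: 'a inp set)"
    using \<open>set ls \<subseteq> Gate ` {..<length gs}\<close> by (intro card_mono) auto
  also have "\<dots> \<le> length gs"
    using card_image_le[of "{..<length gs}" Gate] by simp
  finally show ?thesis .
qed

section \<open>The pointer function and its vtree\<close>

function rl_vtree :: "nat \<Rightarrow> nat \<Rightarrow> nat vtree" where
  "rl_vtree a b = (if a < b then VNode (VLeaf a) (rl_vtree (Suc a) b) else VLeaf a)"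
  by auto
termination by (relation "measure (\<lambda>(a, b). b - a)") auto

declare rl_vtree.simps [simp del]

lemma rl_vtree_VNode: "a < b \<Longrightarrow> rl_vtree a b = VNode (VLeaf a) (rl_vtree (Suc a) b)"
  by (simp add: rl_vtree.simps)

lemma leaves_rl_vtree: "a \<le> b \<Longrightarrow> leaves (rl_vtree a b) = [a..<Suc b]"
proof (induction a b rule: rl_vtree.induct)
  case (1 a b)
  then show ?case
    by (cases "a < b") (simp_all add: rl_vtree.simps upt_rec)
qed

lemma set_leaves_rl_vtree [simp]: "a \<le> b \<Longrightarrow> set (leaves (rl_vtree a b)) = {a..b}"
  by (auto simp: leaves_rl_vtree)

lemma self_in_subtrees [simp]: "T \<in> subtrees T"
  by (cases T) auto

lemma rl_vtree_in_subtrees: "a \<le> c \<Longrightarrow> c \<le> b \<Longrightarrow> rl_vtree c b \<in> subtrees (rl_vtree a b)"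
proof (induction a b rule: rl_vtree.induct)
  case (1 a b)
  then show ?case
    by (cases "a = c") (auto simp: rl_vtree.simps[of a b])
qed

definition ptr_vtree :: "nat \<Rightarrow> nat vtree" where
  "ptr_vtree m = VNode (rl_vtree 1 m) (rl_vtree (m + 1) (2 * m))"

lemma vtree_for_ptr_vtree: "1 \<le> m \<Longrightarrow> vtree_for (ptr_vtree m) {1..2 * m}"
  unfolding vtree_for_def ptr_vtree_def by (auto simp: leaves_rl_vtree)

lemma subtrees_ptr_vtree:
  assumes "1 \<le> m" "v \<in> subtrees (ptr_vtree m)"
  shows "v = ptr_vtree m \<or> set (leaves v) \<subseteq> {1..m} \<or> set (leaves v) \<subseteq> {m + 1..2 * m}"
  using assms leaves_subset_if_subtree[of v "rl_vtree 1 m"]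
    leaves_subset_if_subtree[of v "rl_vtree (m + 1) (2 * m)"]
  by (auto simp: ptr_vtree_def)

definition last_one :: "nat \<Rightarrow> (nat \<Rightarrow> bool) \<Rightarrow> nat \<Rightarrow> bool" where
  "last_one m a t \<longleftrightarrow> a (2 * m - t) \<and> (\<forall>k. 2 * m - t < k \<and> k \<le> 2 * m \<longrightarrow> \<not> a k)"

definition ptr_fun :: "nat \<Rightarrow> (nat \<Rightarrow> bool) \<Rightarrow> bool" where
  "ptr_fun m a \<longleftrightarrow> (\<exists>t<m. a (m - t) \<and> last_one m a t)"

lemma last_one_unique: "last_one m a t \<Longrightarrow> last_one m a t' \<Longrightarrow> t < m \<Longrightarrow> t' < m \<Longrightarrow> t = t'"
  unfolding last_one_def by (metis diff_le_self diff_less_mono2 linorder_neqE_nat mult_2 trans_less_add1)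

lemma last_one_exists:
  assumes "m + 1 \<le> k" "k \<le> 2 * m" "a k"
  shows "\<exists>t<m. last_one m a t"
proof -
  let ?K = "{k. m + 1 \<le> k \<and> k \<le> 2 * m \<and> a k}"
  have fin: "finite ?K"
    by (auto intro: finite_subset[of _ "{..2 * m}"])
  have max: "Max ?K \<in> ?K"
    using assms by (intro Max_in fin) auto
  have above: "\<not> a k" if "Max ?K < k" "k \<le> 2 * m" for k
  proof
    assume "a k"
    then have "k \<in> ?K"
      using that max by auto
    then show False
      using Max_ge[OF fin \<open>k \<in> ?K\<close>] that(1) by simp
  qed
  have eq: "2 * m - (2 * m - Max ?K) = Max ?K"
    using max by auto
  have "last_one m a (2 * m - Max ?K)"
    unfolding last_one_def eq using max above by blast
  moreover have "2 * m - Max ?K < m"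
    using max by auto
  ultimately show ?thesis by blast
qed

lemma ptr_fun_cong:
  assumes "\<forall>i\<in>{1..2 * m}. a i = b i"
  shows "ptr_fun m a = ptr_fun m b"
proof -
  have "a (m - t) = b (m - t)" if "t < m" for t
  proof -
    have "m - t \<in> {1..2 * m}"
      using that by auto
    then show ?thesis
      using assms by blast
  qed
  moreover have "last_one m a t = last_one m b t" if "t < m" for t
    using assms that unfolding last_one_def by auto
  ultimately show ?thesis
    unfolding ptr_fun_def by blast
qed

lemma ptr_fun_probe:
  assumes "S \<subseteq> {1..m}" "d \<in> {1..m}"
  shows "ptr_fun m (\<lambda>x. x \<in> S \<or> x = m + d) = (d \<in> S)"
proof
  assume "ptr_fun m (\<lambda>x. x \<in> S \<or> x = m + d)"
  then obtain t where t: "t < m" "m - t \<in> S \<or> m - t = m + d" "2 * m - t \<in> S \<or> 2 * m - t = m + d"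
    unfolding ptr_fun_def last_one_def by blast
  have "m < 2 * m - t"
    using t(1) by arith
  then have "2 * m - t \<notin> S"
    using assms(1) by auto
  with t have "m - t = d" "m - t \<in> S"
    using assms(1) by auto
  then show "d \<in> S"
    by simp
next
  assume "d \<in> S"
  then have "m - (m - d) \<in> S" "2 * m - (m - d) = m + d"
    using assms(2) by auto
  moreover have "\<not> (k \<in> S \<or> k = m + d)" if "m + d < k" for k
    using assms that by auto
  ultimately show "ptr_fun m (\<lambda>x. x \<in> S \<or> x = m + d)"
    unfolding ptr_fun_def last_one_def using assms(2) by (intro exI[of _ "m - d"]) auto
qed

lemma inj_on_ptr_fun_subfunctions:
  "inj_on (\<lambda>S c. ptr_fun m (override_on c (\<lambda>x. x \<in> S) {1..m})) (Pow {1..m})"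
proof (rule inj_onI, rule ccontr)
  fix S S' assume S: "S \<in> Pow {1..m}" "S' \<in> Pow {1..m}" and "S \<noteq> S'"
    and eq: "(\<lambda>c. ptr_fun m (override_on c (\<lambda>x. x \<in> S) {1..m}))
           = (\<lambda>c. ptr_fun m (override_on c (\<lambda>x. x \<in> S') {1..m}))"
  obtain d where d: "d \<in> {1..m}" "d \<in> S \<longleftrightarrow> d \<notin> S'"
    using S \<open>S \<noteq> S'\<close> by blast
  have probe: "override_on (\<lambda>x. x = m + d) (\<lambda>x. x \<in> T) {1..m} = (\<lambda>x. x \<in> T \<or> x = m + d)"
    if "T \<subseteq> {1..m}" for T
    using that d(1) by (auto simp: override_on_def fun_eq_iff)
  have "ptr_fun m (\<lambda>x. x \<in> S \<or> x = m + d) = ptr_fun m (\<lambda>x. x \<in> S' \<or> x = m + d)"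
    using fun_cong[OF eq, of "\<lambda>x. x = m + d"] S probe by simp
  then show False
    using ptr_fun_probe d S by auto
qed

lemma ptr_fun_not_determined_by_half:
  assumes "1 \<le> m" "W \<subseteq> {1..m} \<or> W \<subseteq> {m + 1..2 * m}"
  shows "\<exists>a b. (\<forall>x\<in>W. a x = b x) \<and> ptr_fun m a \<noteq> ptr_fun m b"
proof -
  have "ptr_fun m (\<lambda>_. True)"
    using assms(1) unfolding ptr_fun_def last_one_def by (intro exI[of _ 0]) auto
  moreover have "\<not> ptr_fun m (\<lambda>x. x \<le> m)" "\<not> ptr_fun m (\<lambda>x. m < x)"
    unfolding ptr_fun_def last_one_def by auto
  ultimately show ?thesis
    using assms(2)
  proof (elim disjE)
    assume "W \<subseteq> {1..m}"
    with \<open>ptr_fun m (\<lambda>_. True)\<close> \<open>\<not> ptr_fun m (\<lambda>x. x \<le> m)\<close> show ?thesis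
      by (intro exI[of _ "\<lambda>_. True"] exI[of _ "\<lambda>x. x \<le> m"]) auto
  next
    assume "W \<subseteq> {m + 1..2 * m}"
    with \<open>ptr_fun m (\<lambda>_. True)\<close> \<open>\<not> ptr_fun m (\<lambda>x. m < x)\<close> show ?thesis
      by (intro exI[of _ "\<lambda>_. True"] exI[of _ "\<lambda>x. m < x"]) auto
  qed
qed

lemma sdd_ptr_fun_splits_at_root:
  assumes m: "1 \<le> m" and acyc: "acyclic_gates gs" and "sdd (ptr_vtree m) gs u"
    and f: "\<And>a. eval_node gs a u = ptr_fun m a"
  obtains j ls where "u = Gate j" "j < length gs" "gs ! j = Or ls"
    "\<forall>k<length ls. \<exists>p s. and_inputs gs (ls ! k) = Some (p, s)
       \<and> sdd (rl_vtree 1 m) gs p \<and> sdd (rl_vtree (m + 1) (2 * m)) gs s"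
    "is_partition (map (\<lambda>g a. eval_node gs a (fst (the (and_inputs gs g)))) ls)"
proof -
  have not_half: False
    if "sdd T gs u" "set (leaves T) \<subseteq> {1..m} \<or> set (leaves T) \<subseteq> {m + 1..2 * m}" for T
    using ptr_fun_not_determined_by_half[OF m that(2)] eval_node_sdd_cong[OF that(1) acyc] f
    by metis
  from \<open>sdd (ptr_vtree m) gs u\<close> show ?thesis
  proof cases
    case (sdd_const b)
    then show ?thesis
      using not_half[of "rl_vtree 1 m"] m by (auto intro: sdd.sdd_const)
  next
    case (sdd_lit x b)
    then have "x \<in> {1..2 * m}"
      using vtree_for_ptr_vtree[OF m] by (simp add: vtree_for_def)
    moreover have "sdd (VLeaf x) gs u"
      using sdd_lit by (simp add: sdd.sdd_lit)
    ultimately show ?thesis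
      using not_half by force
  next
    case (sdd_or j ls vL vR)
    have "sdd (VNode vL vR) gs u"
      using sdd_or by (auto intro: sdd.sdd_or)
    then have "VNode vL vR = ptr_vtree m"
      using subtrees_ptr_vtree[OF m sdd_or(4)] not_half by blast
    then have "vL = rl_vtree 1 m" "vR = rl_vtree (m + 1) (2 * m)"
      by (simp_all add: ptr_vtree_def)
    then show ?thesis
      using that sdd_or by blast
  qed
qed

lemma sdd_size_ptr_fun:
  assumes m: "1 \<le> m" and C: "is_SDD {1..2 * m} (ptr_vtree m) C" "represents C (ptr_fun m)"
  shows "2 ^ m \<le> csize C"
proof -
  obtain gs u where [simp]: "C = (gs, u)"
    by (cases C)
  have acyc: "acyclic_gates gs"
    using C(1) nnf_on_acyclic_gates unfolding is_SDD_def by fastforce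
  have f: "eval_node gs a u = ptr_fun m a" for a
    using C(2) by (simp add: represents_def)
  have "sdd (ptr_vtree m) gs u"
    using C(1) by (simp add: is_SDD_def)
  then obtain j ls where u: "u = Gate j" and root: "j < length gs" "gs ! j = Or ls"
    "\<forall>k<length ls. \<exists>p s. and_inputs gs (ls ! k) = Some (p, s)
       \<and> sdd (rl_vtree 1 m) gs p \<and> sdd (rl_vtree (m + 1) (2 * m)) gs s"
    "is_partition (map (\<lambda>g a. eval_node gs a (fst (the (and_inputs gs g)))) ls)"
    using sdd_ptr_fun_splits_at_root[OF m acyc _ f] by blast
  have "inj_on (\<lambda>a c. eval_node gs (override_on c a (set (leaves (rl_vtree 1 m)))) (Gate j))
      ((\<lambda>S x. x \<in> S) ` Pow {1..m})"
    using inj_on_ptr_fun_subfunctions[of m] m f u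
    by (intro inj_on_imageI) (simp add: comp_def)
  then have "card ((\<lambda>S x. x \<in> S) ` Pow {1..m}) \<le> length gs"
    using m by (intro card_le_length_if_distinct_subfunctions[OF acyc root]) auto
  moreover have "card ((\<lambda>S x. x \<in> S) ` Pow {1..m}) = 2 ^ m"
    by (subst card_image) (auto simp: inj_on_def card_Pow fun_eq_iff)
  ultimately show ?thesis
    by (simp add: csize_def)
qed

text \<open>Gate layout, for \<open>t < m\<close>: gate \<open>t\<close> says that \<open>x\<^bsub>2m-t\<^esub>, \<dots>, x\<^bsub>2m\<^esub>\<close> are all false,
  gate \<open>m + t\<close> says that \<open>x\<^bsub>2m-t\<^esub>\<close> is the last true variable, and gates \<open>2m + t\<close> and
  \<open>3m + t\<close> conjoin this with \<open>x\<^bsub>m-t\<^esub>\<close> and with its negation. Gate \<open>4m\<close> computes the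
  function and gate \<open>4m + 1\<close> its negation. Unary disjunctions stand in for gates computing a
  literal.\<close>
definition ptr_gate :: "nat \<Rightarrow> nat \<Rightarrow> nat gate" where
  "ptr_gate m i =
    (if i < m then (if i = 0 then Or [Lit (2 * m) False] else And (Lit (2 * m - i) False) (Gate (i - 1)))
     else if i < 2 * m then
       (if i = m then Or [Lit (2 * m) True] else And (Lit (3 * m - i) True) (Gate (i - m - 1)))
     else if i < 3 * m then And (Lit (3 * m - i) True) (Gate (i - m))
     else if i < 4 * m then And (Lit (4 * m - i) False) (Gate (i - 2 * m))
     else if i = 4 * m then Or (map (\<lambda>t. Gate (2 * m + t)) [0..<m])
     else Or (map (\<lambda>t. Gate (3 * m + t)) [0..<m] @ [Gate (m - 1)]))"

definition ptr_gates :: "nat \<Rightarrow> nat gate list" where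
  "ptr_gates m = map (ptr_gate m) [0..<4 * m + 2]"

lemma length_ptr_gates [simp]: "length (ptr_gates m) = 4 * m + 2"
  by (simp add: ptr_gates_def)

lemma nth_ptr_gates [simp]: "i < 4 * m + 2 \<Longrightarrow> ptr_gates m ! i = ptr_gate m i"
  by (simp add: ptr_gates_def del: upt_Suc)

lemma acyclic_ptr_gates: "1 \<le> m \<Longrightarrow> acyclic_gates (ptr_gates m)"
  unfolding acyclic_gates_def by (auto simp: ptr_gate_def split: if_split_asm)

lemma nnf_on_ptr_gates:
  assumes "1 \<le> m" "out = 4 * m \<or> out = 4 * m + 1"
  shows "nnf_on {1..2 * m} (ptr_gates m, Gate out)"
proof -
  have "x \<in> {1..2 * m}" if "i < 4 * m + 2" "Lit x b \<in> set (gate_inputs (ptr_gate m i))" for i x b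
    using that by (auto simp: ptr_gate_def split: if_split_asm)
  then show ?thesis
    using acyclic_ptr_gates[OF assms(1)] assms unfolding nnf_on_def acyclic_gates_def by auto
qed

lemma ptr_gates_layout:
  assumes "1 \<le> m"
  shows "ptr_gates m ! 0 = Or [Lit (2 * m) False]"
    and "0 < t \<Longrightarrow> t < m \<Longrightarrow> ptr_gates m ! t = And (Lit (2 * m - t) False) (Gate (t - 1))"
    and "ptr_gates m ! m = Or [Lit (2 * m) True]"
    and "0 < t \<Longrightarrow> t < m \<Longrightarrow> ptr_gates m ! (m + t) = And (Lit (2 * m - t) True) (Gate (t - 1))"
    and "t < m \<Longrightarrow> ptr_gates m ! (2 * m + t) = And (Lit (m - t) True) (Gate (m + t))"
    and "t < m \<Longrightarrow> ptr_gates m ! (3 * m + t) = And (Lit (m - t) False) (Gate (m + t))"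
    and "ptr_gates m ! (4 * m) = Or (map (\<lambda>t. Gate (2 * m + t)) [0..<m])"
    and "ptr_gates m ! (4 * m + 1) = Or (map (\<lambda>t. Gate (3 * m + t)) [0..<m] @ [Gate (m - 1)])"
  using assms by (auto simp: ptr_gate_def)

lemma eval_zero_suffix_gate:
  assumes "1 \<le> m" "t < m"
  shows "eval_node (ptr_gates m) a (Gate t) = (\<forall>k. 2 * m - t \<le> k \<and> k \<le> 2 * m \<longrightarrow> \<not> a k)"
  using assms(2)
proof (induction t)
  case 0
  have "eval_node (ptr_gates m) a (Gate 0) = (\<not> a (2 * m))"
    using eval_node_Or[OF acyclic_ptr_gates[OF assms(1)] _ ptr_gates_layout(1)[OF assms(1)]] by simp
  then show ?case
    by auto
next
  case (Suc t)
  have "eval_node (ptr_gates m) a (Gate (Suc t))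
      = (\<not> a (2 * m - Suc t) \<and> eval_node (ptr_gates m) a (Gate t))"
    using eval_node_And[OF acyclic_ptr_gates[OF assms(1)] _ ptr_gates_layout(2)[OF assms(1), of "Suc t"]]
      Suc.prems by simp
  also have "\<dots> = (\<forall>k. 2 * m - Suc t \<le> k \<and> k \<le> 2 * m \<longrightarrow> \<not> a k)"
  proof -
    have "2 * m - Suc t \<le> k \<longleftrightarrow> k = 2 * m - Suc t \<or> 2 * m - t \<le> k" for k
      using Suc.prems by arith
    then show ?thesis
      using Suc by auto
  qed
  finally show ?case .
qed

lemma eval_last_one_gate:
  assumes "1 \<le> m" "t < m"
  shows "eval_node (ptr_gates m) a (Gate (m + t)) = last_one m a t"
proof (cases t)
  case 0
  have "eval_node (ptr_gates m) a (Gate m) = a (2 * m)"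
    using eval_node_Or[OF acyclic_ptr_gates[OF assms(1)] _ ptr_gates_layout(3)[OF assms(1)]] by simp
  then show ?thesis
    using 0 by (auto simp: last_one_def)
next
  case (Suc s)
  have "eval_node (ptr_gates m) a (Gate (m + t))
      = (a (2 * m - t) \<and> eval_node (ptr_gates m) a (Gate s))"
    using eval_node_And[OF acyclic_ptr_gates[OF assms(1)] _ ptr_gates_layout(4)[OF assms(1), of t]]
      assms Suc by simp
  also have "\<dots> = last_one m a t"
  proof -
    have "2 * m - s \<le> k \<longleftrightarrow> 2 * m - t < k" for k
      using assms Suc by arith
    then show ?thesis
      using eval_zero_suffix_gate[OF assms(1), of s] assms Suc by (simp add: last_one_def)
  qed
  finally show ?thesis .
qed

lemma eval_select_gates:
  assumes "1 \<le> m" "t < m"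
  shows "eval_node (ptr_gates m) a (Gate (2 * m + t)) = (a (m - t) \<and> last_one m a t)"
    and "eval_node (ptr_gates m) a (Gate (3 * m + t)) = (\<not> a (m - t) \<and> last_one m a t)"
  using eval_node_And[OF acyclic_ptr_gates[OF assms(1)] _ ptr_gates_layout(5)[OF assms]]
    eval_node_And[OF acyclic_ptr_gates[OF assms(1)] _ ptr_gates_layout(6)[OF assms]]
    eval_last_one_gate[OF assms] assms
  by auto

lemma no_last_one_iff:
  "(\<forall>k. m + 1 \<le> k \<and> k \<le> 2 * m \<longrightarrow> \<not> a k) \<longleftrightarrow> \<not> (\<exists>t<m. last_one m a t)"
proof
  assume "\<forall>k. m + 1 \<le> k \<and> k \<le> 2 * m \<longrightarrow> \<not> a k"
  moreover have "m + 1 \<le> 2 * m - t" "2 * m - t \<le> 2 * m" if "t < m" for t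
    using that by arith+
  ultimately show "\<not> (\<exists>t<m. last_one m a t)"
    unfolding last_one_def by blast
qed (use last_one_exists in blast)

lemma eval_ptr_outputs:
  assumes "1 \<le> m"
  shows "eval_node (ptr_gates m) a (Gate (4 * m)) = ptr_fun m a"
    and "eval_node (ptr_gates m) a (Gate (4 * m + 1)) = (\<not> ptr_fun m a)"
proof -
  have acyc: "acyclic_gates (ptr_gates m)"
    by (rule acyclic_ptr_gates[OF assms])
  show "eval_node (ptr_gates m) a (Gate (4 * m)) = ptr_fun m a"
    using eval_node_Or[OF acyc _ ptr_gates_layout(7)[OF assms]] eval_select_gates(1)[OF assms]
    by (auto simp: ptr_fun_def)
  have "eval_node (ptr_gates m) a (Gate (4 * m + 1))
      = ((\<exists>t<m. \<not> a (m - t) \<and> last_one m a t) \<or> \<not> (\<exists>t<m. last_one m a t))"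
    using eval_node_Or[OF acyc _ ptr_gates_layout(8)[OF assms]] eval_select_gates(2)[OF assms]
      eval_zero_suffix_gate[OF assms, of "m - 1"] assms no_last_one_iff[of m a]
    by (auto simp: Suc_diff_le)
  also have "\<dots> = (\<not> ptr_fun m a)"
    unfolding ptr_fun_def using last_one_unique by blast
  finally show "eval_node (ptr_gates m) a (Gate (4 * m + 1)) = (\<not> ptr_fun m a)" .
qed

lemma node_vars_zero_suffix_gate:
  assumes "1 \<le> m" "t < m"
  shows "node_vars (ptr_gates m) (Gate t) \<subseteq> {2 * m - t..2 * m}"
  using assms(2)
proof (induction t)
  case 0
  then show ?case
    using node_vars_Gate[OF acyclic_ptr_gates[OF assms(1)], of 0] ptr_gates_layout(1)[OF assms(1)] by simp
next
  case (Suc t)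
  then have "node_vars (ptr_gates m) (Gate (Suc t))
      = insert (2 * m - Suc t) (node_vars (ptr_gates m) (Gate t))"
    using node_vars_Gate[OF acyclic_ptr_gates[OF assms(1)], of "Suc t"]
      ptr_gates_layout(2)[OF assms(1), of "Suc t"] by simp
  then show ?case
    using Suc by (auto simp: subset_iff)
qed

lemma node_vars_last_one_gate:
  assumes "1 \<le> m" "t < m"
  shows "node_vars (ptr_gates m) (Gate (m + t)) \<subseteq> {2 * m - t..2 * m}"
proof (cases t)
  case 0
  then show ?thesis
    using node_vars_Gate[OF acyclic_ptr_gates[OF assms(1)], of m] ptr_gates_layout(3)[OF assms(1)] by simp
next
  case (Suc s)
  then have "node_vars (ptr_gates m) (Gate (m + t))
      = insert (2 * m - t) (node_vars (ptr_gates m) (Gate s))"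
    using node_vars_Gate[OF acyclic_ptr_gates[OF assms(1)], of "m + t"] assms
      ptr_gates_layout(4)[OF assms(1), of t] by simp
  then show ?thesis
    using node_vars_zero_suffix_gate[OF assms(1), of s] assms Suc by (auto simp: subset_iff)
qed

lemma ptr_gate_index_cases:
  fixes i m :: nat
  assumes "i < 4 * m + 2"
  obtains (zero_suffix) t where "t < m" "i = t"
    | (last_one) t where "t < m" "i = m + t"
    | (select) t where "t < m" "i = 2 * m + t"
    | (reject) t where "t < m" "i = 3 * m + t"
    | (pos_output) "i = 4 * m"
    | (neg_output) "i = 4 * m + 1"
proof -
  consider "i < m" | "m \<le> i" "i < 2 * m" | "2 * m \<le> i" "i < 3 * m" | "3 * m \<le> i" "i < 4 * m"
    | "i = 4 * m" | "i = 4 * m + 1"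
    using assms by linarith
  then show ?thesis
  proof cases
    case 2
    then show ?thesis using last_one[of "i - m"] by auto
  next
    case 3
    then show ?thesis using select[of "i - 2 * m"] by auto
  next
    case 4
    then show ?thesis using reject[of "i - 3 * m"] by auto
  qed (use that in auto)
qed

lemma ptr_gates_And:
  assumes m: "1 \<le> m" and i: "i < 4 * m + 2" "ptr_gates m ! i = And l r"
  shows "(\<exists>t b. 0 < t \<and> t < m \<and> l = Lit (2 * m - t) b
            \<and> node_vars (ptr_gates m) r \<subseteq> {2 * m - t + 1..2 * m})
       \<or> (\<exists>x b. x \<in> {1..m} \<and> l = Lit x b \<and> node_vars (ptr_gates m) r \<subseteq> {m + 1..2 * m})"
  using i(1)
proof (cases rule: ptr_gate_index_cases)
  case (zero_suffix t)
  then have "0 < t"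
    using i(2) ptr_gates_layout(1)[OF m] by (cases t) auto
  then have "l = Lit (2 * m - t) False" "r = Gate (t - 1)"
    using i(2) ptr_gates_layout(2)[OF m, of t] zero_suffix by auto
  moreover have "node_vars (ptr_gates m) (Gate (t - 1)) \<subseteq> {2 * m - t + 1..2 * m}"
    using node_vars_zero_suffix_gate[OF m, of "t - 1"] \<open>0 < t\<close> zero_suffix(1)
    by (simp add: Suc_diff_le)
  ultimately show ?thesis
    using \<open>0 < t\<close> zero_suffix(1) by (intro disjI1 exI[of _ t] exI[of _ False]) simp
next
  case (last_one t)
  then have "0 < t"
    using i(2) ptr_gates_layout(3)[OF m] by (cases t) auto
  then have "l = Lit (2 * m - t) True" "r = Gate (t - 1)"
    using i(2) ptr_gates_layout(4)[OF m, of t] last_one by auto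
  moreover have "node_vars (ptr_gates m) (Gate (t - 1)) \<subseteq> {2 * m - t + 1..2 * m}"
    using node_vars_zero_suffix_gate[OF m, of "t - 1"] \<open>0 < t\<close> last_one(1)
    by (simp add: Suc_diff_le)
  ultimately show ?thesis
    using \<open>0 < t\<close> last_one(1) by (intro disjI1 exI[of _ t] exI[of _ True]) simp
next
  case (select t)
  then have "l = Lit (m - t) True" "r = Gate (m + t)"
    using i(2) ptr_gates_layout(5)[OF m, of t] by auto
  then show ?thesis
    using node_vars_last_one_gate[OF m select(1)] select(1)
    by (intro disjI2 exI[of _ "m - t"] exI[of _ True]) (auto simp: subset_iff)
next
  case (reject t)
  then have "l = Lit (m - t) False" "r = Gate (m + t)"
    using i(2) ptr_gates_layout(6)[OF m, of t] by auto
  then show ?thesis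
    using node_vars_last_one_gate[OF m reject(1)] reject(1)
    by (intro disjI2 exI[of _ "m - t"] exI[of _ False]) (auto simp: subset_iff)
qed (use i(2) ptr_gates_layout(7,8)[OF m] in auto)

lemma decomposable_ptr_gates:
  assumes m: "1 \<le> m"
  shows "decomposable (ptr_gates m)"
  unfolding decomposable_def
proof (intro allI impI)
  fix i l r assume i: "i < length (ptr_gates m)" "ptr_gates m ! i = And l r"
  then have "i < 4 * m + 2"
    by simp
  from ptr_gates_And[OF m this i(2)]
  show "node_vars (ptr_gates m) l \<inter> node_vars (ptr_gates m) r = {}"
    by (elim disjE exE conjE) (auto simp: subset_iff)
qed

lemma suffix_node_in_ptr_vtree:
  assumes "0 < t" "t < m"
  shows "VNode (VLeaf (2 * m - t)) (rl_vtree (2 * m - t + 1) (2 * m)) \<in> subtrees (ptr_vtree m)"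
proof -
  have "rl_vtree (2 * m - t) (2 * m) \<in> subtrees (rl_vtree (m + 1) (2 * m))"
    using assms by (intro rl_vtree_in_subtrees) auto
  moreover have "rl_vtree (2 * m - t) (2 * m) = VNode (VLeaf (2 * m - t)) (rl_vtree (2 * m - t + 1) (2 * m))"
    using assms by (simp add: rl_vtree_VNode)
  ultimately show ?thesis
    by (simp add: ptr_vtree_def)
qed

lemma respects_vtree_ptr_gates:
  assumes m: "1 \<le> m"
  shows "respects_vtree (ptr_gates m) (ptr_vtree m)"
  unfolding respects_vtree_def
proof (intro allI impI)
  fix i l r assume i: "i < length (ptr_gates m)" "ptr_gates m ! i = And l r"
  then have "i < 4 * m + 2"
    by simp
  from ptr_gates_And[OF m this i(2)] consider
      (suffix) t b where "0 < t" "t < m" "l = Lit (2 * m - t) b"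
        "node_vars (ptr_gates m) r \<subseteq> {2 * m - t + 1..2 * m}"
    | (root) x b where "x \<in> {1..m}" "l = Lit x b" "node_vars (ptr_gates m) r \<subseteq> {m + 1..2 * m}"
    by blast
  then show "\<exists>vl vr. VNode vl vr \<in> subtrees (ptr_vtree m)
      \<and> node_vars (ptr_gates m) l \<subseteq> set (leaves vl) \<and> node_vars (ptr_gates m) r \<subseteq> set (leaves vr)"
  proof cases
    case suffix
    then show ?thesis
      using suffix_node_in_ptr_vtree[OF suffix(1,2)] by (intro exI) auto
  next
    case root
    then show ?thesis
      using m by (intro exI[of _ "rl_vtree 1 m"] exI[of _ "rl_vtree (m + 1) (2 * m)"])
        (auto simp: ptr_vtree_def)
  qed
qed

lemma eval_neg_output_inputs:
  assumes "1 \<le> m" "j \<le> m"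
  shows "eval_node (ptr_gates m) a ((map (\<lambda>t. Gate (3 * m + t)) [0..<m] @ [Gate (m - 1)]) ! j)
    = (if j < m then \<not> a (m - j) \<and> last_one m a j else \<not> (\<exists>t<m. last_one m a t))"
  using assms eval_select_gates(2)[OF assms(1), of j] eval_zero_suffix_gate[OF assms(1), of "m - 1"]
    no_last_one_iff[of m a]
  by (auto simp: nth_append Suc_diff_le)

lemma deterministic_ptr_gates:
  assumes m: "1 \<le> m"
  shows "deterministic (ptr_gates m)"
  unfolding deterministic_def
proof (intro allI impI notI)
  fix i ls k k' a
  assume i: "i < length (ptr_gates m)" "ptr_gates m ! i = Or ls"
    and k: "k < length ls" "k' < length ls" "k \<noteq> k'"
    and both: "eval_node (ptr_gates m) a (ls ! k) \<and> eval_node (ptr_gates m) a (ls ! k')"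
  have "i < 4 * m + 2"
    using i(1) by simp
  then show False
  proof (cases rule: ptr_gate_index_cases)
    case (zero_suffix t)
    then show False
      using i(2) k ptr_gates_layout(1)[OF m] ptr_gates_layout(2)[OF m, of t] by (cases "t = 0") auto
  next
    case (last_one t)
    then show False
      using i(2) k ptr_gates_layout(3)[OF m] ptr_gates_layout(4)[OF m, of t] by (cases "t = 0") auto
  next
    case (select t)
    then show False
      using i(2) ptr_gates_layout(5)[OF m, of t] by simp
  next
    case (reject t)
    then show False
      using i(2) ptr_gates_layout(6)[OF m, of t] by simp
  next
    case pos_output
    then have "ls = map (\<lambda>t. Gate (2 * m + t)) [0..<m]"
      using i(2) ptr_gates_layout(7)[OF m] by simp
    then show False
      using k both eval_select_gates(1)[OF m] last_one_unique by auto
  next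
    case neg_output
    then have ls: "ls = map (\<lambda>t. Gate (3 * m + t)) [0..<m] @ [Gate (m - 1)]"
      using i(2) ptr_gates_layout(8)[OF m] by simp
    then show False
      using both k eval_neg_output_inputs[OF m, of k a] eval_neg_output_inputs[OF m, of k' a]
        last_one_unique[of m a k k']
      by (auto split: if_splits)
  qed
qed

lemma structured_dDNNF_ptr_gates:
  assumes "1 \<le> m" "out = 4 * m \<or> out = 4 * m + 1"
  shows "structured_dDNNF {1..2 * m} (ptr_vtree m) (ptr_gates m, Gate out)"
  unfolding structured_dDNNF_def
  using assms nnf_on_ptr_gates decomposable_ptr_gates deterministic_ptr_gates respects_vtree_ptr_gates
  by simp

lemma ptr_fun_dDNNFs:
  assumes "1 \<le> m"
  shows "\<exists>C. structured_dDNNF {1..2 * m} (ptr_vtree m) C \<and> represents C (ptr_fun m)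
           \<and> csize C = 4 * m + 2"
    and "\<exists>C. structured_dDNNF {1..2 * m} (ptr_vtree m) C \<and> represents C (\<lambda>a. \<not> ptr_fun m a)
           \<and> csize C = 4 * m + 2"
  using structured_dDNNF_ptr_gates[OF assms, of "4 * m"] structured_dDNNF_ptr_gates[OF assms, of "4 * m + 1"]
    eval_ptr_outputs[OF assms]
  by (intro exI[of _ "(ptr_gates m, Gate (4 * m))"] exI[of _ "(ptr_gates m, Gate (4 * m + 1))"];
      simp add: represents_def csize_def)+

theorem mainTheorem1:
  shows "\<exists>(N :: nat set) (f :: nat \<Rightarrow> (nat \<Rightarrow> bool) \<Rightarrow> bool) (T :: nat \<Rightarrow> nat vtree).
     infinite N
   \<and> (\<forall>n\<in>N. vtree_for (T n) {1..n})
   \<and> (\<forall>n\<in>N. \<forall>a b. (\<forall>i\<in>{1..n}. a i = b i) \<longrightarrow> f n a = f n b)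
   \<and> (\<exists>(c :: real) (k :: nat). \<forall>n\<in>N.
        (\<exists>C. structured_dDNNF {1..n} (T n) C \<and> represents C (f n)
             \<and> real (csize C) \<le> c * real n ^ k)
      \<and> (\<exists>C. structured_dDNNF {1..n} (T n) C \<and> represents C (\<lambda>a. \<not> f n a)
             \<and> real (csize C) \<le> c * real n ^ k))
   \<and> (\<exists>(\<epsilon> :: real) > 0. \<exists>n0. \<forall>n\<in>N. n \<ge> n0 \<longrightarrow>
        (\<forall>C. is_SDD {1..n} (T n) C \<and> represents C (f n) \<longrightarrow> 2 powr (\<epsilon> * real n) \<le> real (csize C)))"
proof (intro exI conjI)
  let ?N = "(\<lambda>m. 2 * m) ` {1::nat..}"
  show "infinite ?N"
    using infinite_Ici by (auto dest!: finite_imageD simp: inj_on_def)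
  show "\<forall>n\<in>?N. vtree_for (ptr_vtree (n div 2)) {1..n}"
    using vtree_for_ptr_vtree by auto
  show "\<forall>n\<in>?N. \<forall>a b. (\<forall>i\<in>{1..n}. a i = b i) \<longrightarrow> ptr_fun (n div 2) a = ptr_fun (n div 2) b"
    using ptr_fun_cong by auto
  show "\<forall>n\<in>?N.
      (\<exists>C. structured_dDNNF {1..n} (ptr_vtree (n div 2)) C \<and> represents C (ptr_fun (n div 2))
           \<and> real (csize C) \<le> 3 * real n ^ 1)
    \<and> (\<exists>C. structured_dDNNF {1..n} (ptr_vtree (n div 2)) C \<and> represents C (\<lambda>a. \<not> ptr_fun (n div 2) a)
           \<and> real (csize C) \<le> 3 * real n ^ 1)"
    using ptr_fun_dDNNFs by fastforce
  show "(1 / 2 :: real) > 0"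
    by simp
  show "\<forall>n\<in>?N. 0 \<le> n \<longrightarrow> (\<forall>C. is_SDD {1..n} (ptr_vtree (n div 2)) C \<and> represents C (ptr_fun (n div 2))
      \<longrightarrow> 2 powr (1 / 2 * real n) \<le> real (csize C))"
    using sdd_size_ptr_fun by (auto simp: powr_realpow)
qed

end
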